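(* Let $M\ge2$, $1\le n\le M-1$, and let $k,k'\in\mathfrak{L}_M$ satisfy $k_{n-1}=k_n=k_{n+1}=1$ and $k'=k+e^n$, where $e^n$ is the $n$th standard basis vector of $\mathbb{Z}^{M+1}$. Then, as polynomials, $a(x,k')=-2x_{n-1}x_n\,a(x,k)$; in particular $a(x,k')/a(x,k)=-2x_{n-1}x_n$.
   Context: For $M\geq1$, $\mathfrak{L}_M\subset\mathbb{Z}^{M+1}_{\geq0}$ denotes the set of $k=(k_0,\ldots,k_M)$ with $k_0=1$ such that for all $1\leq n\leq M$, $k_n>0$ implies $k_{n-1}>0$. Vectors are indexed from $0$; $\mathbb{1}=(1,\ldots,1)$; inequalities and $\min$ between vectors are entrywise. Multi-index notation: $x^k=\prod_n x_n^{k_n}$, $\binom{k}{b}=\prod_n\binom{k_n}{b_n}$. For $k\in\mathfrak{L}_M$, $\tilde k=(k_1,\ldots,k_M,0)$, $u=\min\{\mathbb{1},\tilde k\}$, $V(k)=\{b\in\mathbb{Z}^{M+1}: u\le b\le \min\{k,\tilde k\}\}$, and $$a(x,k)=\sum_{b\in V(k)}\binom{k}{b}\binom{\tilde k-u}{b-u}(-x)^{\tilde k-b}x^{k-b}\prod_{n=0}^M(1-x_n^2)^{b_n}.$$ *)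

theory Defs
  imports Main
begin

text \<open>Vectors in Z^{M+1}_{>=0} indexed 0..M are represented as functions nat => nat
  that vanish beyond index M.\<close>

definition LM :: "nat \<Rightarrow> (nat \<Rightarrow> nat) \<Rightarrow> bool" where
  "LM M k \<longleftrightarrow> k 0 = 1 \<and> (\<forall>n\<in>{1..M}. k n > 0 \<longrightarrow> k (n - 1) > 0) \<and> (\<forall>i>M. k i = 0)"

definition ktil :: "nat \<Rightarrow> (nat \<Rightarrow> nat) \<Rightarrow> nat \<Rightarrow> nat" where
  "ktil M k n = (if n < M then k (Suc n) else 0)"

definition uvec :: "nat \<Rightarrow> (nat \<Rightarrow> nat) \<Rightarrow> nat \<Rightarrow> nat" where
  "uvec M k n = min 1 (ktil M k n)"

definition Vset :: "nat \<Rightarrow> (nat \<Rightarrow> nat) \<Rightarrow> (nat \<Rightarrow> nat) set" where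
  "Vset M k = {b. (\<forall>n\<le>M. uvec M k n \<le> b n \<and> b n \<le> min (k n) (ktil M k n)) \<and> (\<forall>n>M. b n = 0)}"

definition avec :: "nat \<Rightarrow> (nat \<Rightarrow> 'a::comm_ring_1) \<Rightarrow> (nat \<Rightarrow> nat) \<Rightarrow> 'a" where
  "avec M x k = (\<Sum>b\<in>Vset M k.
      of_nat (\<Prod>n\<le>M. (k n choose b n)) *
      of_nat (\<Prod>n\<le>M. ((ktil M k n - uvec M k n) choose (b n - uvec M k n))) *
      (\<Prod>n\<le>M. (- x n) ^ (ktil M k n - b n)) *
      (\<Prod>n\<le>M. x n ^ (k n - b n)) *
      (\<Prod>n\<le>M. (1 - (x n)\<^sup>2) ^ b n))"

end

theory Submission
  imports Defs
begin

(* Write a(x,k) = sum over b in V(k) of a summand t(x,k,b).  Passing from k to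
   k' = k + e^n with k_{n-1} = k_n = k_{n+1} = 1 changes only two entries of the data entering
   the formula: k_n becomes 2 and, since tilde k is k shifted down by one, tilde k_{n-1}
   becomes 2.  Every other entry of k, tilde k and u is unchanged, and the bounds
   min(k, tilde k) at the positions n-1 and n stay equal to 1, so V(k') = V(k); moreover
   every b in V(k) has b_{n-1} = b_n = 1.  Comparing the summands factor by factor, the
   only changes are binom(k'_n, b_n) = 2 (instead of 1), an extra factor -x_{n-1} from
   (-x)^(tilde k - b), and an extra factor x_n from x^(k - b).  Hence every summand, and so
   a(x,k), gets multiplied by -2 x_{n-1} x_n. *)

definition aterm :: "nat \<Rightarrow> (nat \<Rightarrow> 'a::comm_ring_1) \<Rightarrow> (nat \<Rightarrow> nat) \<Rightarrow> (nat \<Rightarrow> nat) \<Rightarrow> 'a" where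
  "aterm M x k b =
      of_nat (\<Prod>n\<le>M. (k n choose b n)) *
      of_nat (\<Prod>n\<le>M. ((ktil M k n - uvec M k n) choose (b n - uvec M k n))) *
      (\<Prod>n\<le>M. (- x n) ^ (ktil M k n - b n)) *
      (\<Prod>n\<le>M. x n ^ (k n - b n)) *
      (\<Prod>n\<le>M. (1 - (x n)\<^sup>2) ^ b n)"

lemma avec_as_sum: "avec M x k = (\<Sum>b\<in>Vset M k. aterm M x k b)"
  by (simp add: avec_def aterm_def)

lemma prod_change_one:
  assumes "finite A" "j \<in> A" "\<And>i. i \<in> A \<Longrightarrow> i \<noteq> j \<Longrightarrow> f i = g i" "f j = c * g j"
  shows "prod f A = (c::'a::comm_monoid_mult) * prod g A"
proof -
  have "prod f A = f j * prod f (A - {j})" using assms(1,2) by (simp add: prod.remove)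
  also have "prod f (A - {j}) = prod g (A - {j})" using assms(3) by (intro prod.cong) auto
  also have "f j * prod g (A - {j}) = c * (g j * prod g (A - {j}))" using assms(4) by (simp add: mult.assoc)
  also have "g j * prod g (A - {j}) = prod g A" using assms(1,2) by (simp add: prod.remove)
  finally show ?thesis .
qed

text \<open>Since \<open>tilde k\<close> is \<open>k\<close> shifted down by one, changing \<open>k\<close> at a position \<open>1 \<le> n \<le> M\<close>
  changes \<open>tilde k\<close> exactly at \<open>n - 1\<close>.\<close>

lemma ktil_update:
  assumes "1 \<le> n" "n \<le> M"
  shows "ktil M (k(n := v)) = (ktil M k)(n - 1 := v)"
  using assms by (auto simp: ktil_def fun_eq_iff)

lemma Vset_cong:
  assumes "\<And>i. i \<le> M \<Longrightarrow> uvec M k i = uvec M k' i"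
    and "\<And>i. i \<le> M \<Longrightarrow> min (k i) (ktil M k i) = min (k' i) (ktil M k' i)"
  shows "Vset M k = Vset M k'"
  using assms unfolding Vset_def by auto

text \<open>If \<open>k_i = 1\<close> and \<open>tilde k_i \<ge> 1\<close>, then both bounds at \<open>i\<close> equal 1, so \<open>b_i = 1\<close> on \<open>V(k)\<close>.\<close>

lemma Vset_entry_one:
  assumes "b \<in> Vset M k" "i \<le> M" "k i = 1" "ktil M k i \<ge> 1"
  shows "b i = 1"
proof -
  have "uvec M k i = 1" using assms(4) by (simp add: uvec_def)
  with assms show ?thesis unfolding Vset_def by fastforce
qed

lemma Vset_bump:
  assumes "1 \<le> n" "n < M" "k (n - 1) \<le> 1" "k n = 1" "k (n + 1) \<le> 1"
  shows "Vset M (k(n := 2)) = Vset M k"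
proof (rule Vset_cong)
  have kt: "ktil M (k(n := 2)) = (ktil M k)(n - 1 := 2)"
    using assms(1,2) by (intro ktil_update) auto
  have ktn: "ktil M k (n - 1) = 1" "ktil M k n = k (n + 1)"
    using assms by (auto simp: ktil_def)
  fix i assume "i \<le> M"
  show "uvec M (k(n := 2)) i = uvec M k i"
    using ktn by (auto simp: uvec_def kt)
  show "min ((k(n := 2)) i) (ktil M (k(n := 2)) i) = min (k i) (ktil M k i)"
    using assms(1,3-5) ktn by (auto simp: kt)
qed

lemma aterm_bump:
  fixes x :: "nat \<Rightarrow> 'a::comm_ring_1"
  assumes "1 \<le> n" "n < M" "k n = 1" "b (n - 1) = 1" "b n = 1"
  shows "aterm M x (k(n := 2)) b = - 2 * x (n - 1) * x n * aterm M x k b"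
proof -
  define k' where "k' = k(n := 2)"
  have kt: "ktil M k' = (ktil M k)(n - 1 := 2)"
    unfolding k'_def using assms(1,2) by (intro ktil_update) auto
  have kt_old: "ktil M k (n - 1) = 1" using assms by (auto simp: ktil_def)
  have u: "uvec M k' = uvec M k"
    using kt_old by (auto simp: uvec_def kt fun_eq_iff)
  have u_old: "uvec M k (n - 1) = 1" using kt_old by (simp add: uvec_def)
  have binom_k: "(\<Prod>i\<le>M. (k' i choose b i)) = 2 * (\<Prod>i\<le>M. (k i choose b i))"
    by (rule prod_change_one[where j = n]) (use assms in \<open>auto simp: k'_def\<close>)
  have binom_ktil:
    "(\<Prod>i\<le>M. ((ktil M k' i - uvec M k i) choose (b i - uvec M k i)))
       = (\<Prod>i\<le>M. ((ktil M k i - uvec M k i) choose (b i - uvec M k i)))"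
    using assms(4) kt_old u_old by (intro prod.cong) (auto simp: kt)
  have pow_ktil: "(\<Prod>i\<le>M. (- x i) ^ (ktil M k' i - b i))
      = - x (n - 1) * (\<Prod>i\<le>M. (- x i) ^ (ktil M k i - b i))"
    by (rule prod_change_one[where j = "n - 1"]) (use assms kt_old in \<open>auto simp: kt\<close>)
  have pow_k: "(\<Prod>i\<le>M. x i ^ (k' i - b i)) = x n * (\<Prod>i\<le>M. x i ^ (k i - b i))"
    by (rule prod_change_one[where j = n]) (use assms in \<open>auto simp: k'_def\<close>)
  show ?thesis
    unfolding k'_def[symmetric] aterm_def u binom_k binom_ktil pow_ktil pow_k
    by (simp add: algebra_simps)
qed

lemma avec_bump:
  fixes x :: "nat \<Rightarrow> 'a::comm_ring_1"
  assumes "1 \<le> n" "n < M" "k (n - 1) = 1" "k n = 1" "k (n + 1) = 1"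
  shows "avec M x (k(n := 2)) = - 2 * x (n - 1) * x n * avec M x k"
proof -
  have ktil_one: "ktil M k (n - 1) = 1" "ktil M k n = 1"
    using assms by (auto simp: ktil_def)
  have "aterm M x (k(n := 2)) b = - 2 * x (n - 1) * x n * aterm M x k b"
    if "b \<in> Vset M k" for b
  proof (rule aterm_bump)
    show "b (n - 1) = 1" "b n = 1"
      using Vset_entry_one[OF that] assms(2-4) ktil_one by auto
  qed (use assms in auto)
  moreover have "Vset M (k(n := 2)) = Vset M k"
    using assms by (intro Vset_bump) auto
  ultimately show ?thesis
    unfolding avec_as_sum sum_distrib_left by (intro sum.cong) auto
qed

theorem proposition2p4:
  fixes M n :: nat and k k' :: "nat \<Rightarrow> nat" and x :: "nat \<Rightarrow> 'a::field"
  assumes "M \<ge> 2" and "1 \<le> n" and "n \<le> M - 1"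
    and "LM M k" and "LM M k'"
    and "k (n - 1) = 1" and "k n = 1" and "k (n + 1) = 1"
    and "k' = k(n := k n + 1)"
  shows "avec M x k' = - 2 * x (n - 1) * x n * avec M x k
    \<and> (avec M x k \<noteq> 0 \<longrightarrow> avec M x k' / avec M x k = - 2 * x (n - 1) * x n)"
proof -
  have "n < M" using assms(1,3) by arith
  moreover have "k' = k(n := 2)" using assms(7,9) by (simp add: numeral_2_eq_2)
  ultimately have "avec M x k' = - 2 * x (n - 1) * x n * avec M x k"
    using avec_bump assms(2,6-8) by blast
  then show ?thesis by simp
qed

end
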